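(* Let $H = (V,E)$ be a hypertree with $E = \{e_1, \ldots, e_k\}$. Suppose that each edge $e_i$ has an associated (strict) partial order $<_i$ on the vertex set $e_i$. Define the relation $<$ on $V$ as the transitive closure of all the relations $<_i$, i.e. $x < y$ iff there is a chain $x = v_1 <_{i_1} v_2 <_{i_2} \cdots <_{i_{l-1}} v_l = y$ with $l \ge 2$. Then $(V, <)$ is a poset.
   Context: A hypergraph is a pair $H=(V,E)$ with $V$ finite and $E$ a family of subsets of $V$ (edges) with $|e|>1$ for each $e\in E$. A path is a sequence $v_1, e_1, v_2, e_2, \ldots, e_m, v_{m+1}$ with $e_i \in E$, $v_i, v_{i+1} \in e_i$, the edges distinct and the vertices distinct except that $v_1 = v_{m+1}$ is allowed; if $v_1 = v_{m+1}$ and $m>1$ it is a cycle. $H$ is connected if there is a path between any two vertices. A hypertree is a connected hypergraph with no cycles. *)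

theory Defs
  imports Main
begin

definition hypergraph :: "'a set \<Rightarrow> 'a set set \<Rightarrow> bool" where
  "hypergraph V E \<longleftrightarrow> finite V \<and> (\<forall>e\<in>E. e \<subseteq> V \<and> card e > 1)"

definition hpath :: "'a set \<Rightarrow> 'a set set \<Rightarrow> 'a list \<Rightarrow> 'a set list \<Rightarrow> bool" where
  "hpath V E vs es \<longleftrightarrow>
     length vs = length es + 1 \<and> set vs \<subseteq> V \<and> set es \<subseteq> E \<and>
     (\<forall>i < length es. vs ! i \<in> es ! i \<and> vs ! (i+1) \<in> es ! i) \<and>
     distinct es \<and>
     (distinct vs \<or> (distinct (butlast vs) \<and> distinct (tl vs) \<and> hd vs = last vs))"

definition hcycle :: "'a set \<Rightarrow> 'a set set \<Rightarrow> 'a list \<Rightarrow> 'a set list \<Rightarrow> bool" where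
  "hcycle V E vs es \<longleftrightarrow> hpath V E vs es \<and> hd vs = last vs \<and> length es > 1"

definition hconnected :: "'a set \<Rightarrow> 'a set set \<Rightarrow> bool" where
  "hconnected V E \<longleftrightarrow>
     (\<forall>x\<in>V. \<forall>y\<in>V. \<exists>vs es. hpath V E vs es \<and> hd vs = x \<and> last vs = y)"

definition hypertree :: "'a set \<Rightarrow> 'a set set \<Rightarrow> bool" where
  "hypertree V E \<longleftrightarrow> hypergraph V E \<and> hconnected V E \<and> (\<nexists>vs es. hcycle V E vs es)"

definition strict_partial_order_on :: "'a set \<Rightarrow> 'a rel \<Rightarrow> bool" where
  "strict_partial_order_on A r \<longleftrightarrow> r \<subseteq> A \<times> A \<and> irrefl r \<and> trans r"

end

theory Submission
  imports Defs
begin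

text \<open>If x < x, take a shortest closed chain x = v_0 <_{f_0} v_1 <_{f_1} ... <_{f_{n-1}} v_n = x.
  By minimality its vertices are distinct (otherwise a shorter closed chain can be cut out),
  consecutive edges differ (otherwise transitivity of that edge's order merges two steps),
  and n \<ge> 2 by irreflexivity. If all edges of the chain are distinct it is a cycle of the
  hypertree; otherwise the two equal edges closest together enclose a segment that, closed up
  through the repeated edge, is a cycle. Either way the hypertree has a cycle.\<close>

definition hwalk :: "'a set set \<Rightarrow> (nat \<Rightarrow> 'a) \<Rightarrow> (nat \<Rightarrow> 'a set) \<Rightarrow> nat \<Rightarrow> bool" where
  "hwalk E v f n \<longleftrightarrow> (\<forall>i<n. f i \<in> E \<and> v i \<in> f i \<and> v (Suc i) \<in> f i)"

definition ord_chain ::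
    "'a set set \<Rightarrow> ('a set \<Rightarrow> 'a rel) \<Rightarrow> (nat \<Rightarrow> 'a) \<Rightarrow> (nat \<Rightarrow> 'a set) \<Rightarrow> nat \<Rightarrow> bool" where
  "ord_chain E ord v f n \<longleftrightarrow> (\<forall>i<n. f i \<in> E \<and> (v i, v (Suc i)) \<in> ord (f i))"

lemma closed_hwalk_hcycle:
  assumes EV: "\<forall>e\<in>E. e \<subseteq> V" and n: "n \<ge> 2" and walk: "hwalk E v f n"
    and inj_f: "inj_on f {..<n}" and inj_v: "inj_on v {..<n}" and closed: "v n = v 0"
  shows "hcycle V E (map v [0..<Suc n]) (map f [0..<n])"
proof -
  have vs: "map v [0..<Suc n] = map v [0..<n] @ [v 0]"
    by (simp add: closed)
  have tl_vs: "tl (map v [0..<Suc n]) = map v [1..<n] @ [v 0]"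
    using n closed by (simp add: upt_conv_Cons)
  have "v 0 \<notin> v ` {1..<n}"
    using inj_v n by (auto dest: inj_onD)
  moreover have "inj_on v {1..<n}"
    using inj_v by (rule inj_on_subset) auto
  ultimately have "distinct (tl (map v [0..<Suc n]))"
    unfolding tl_vs by (simp add: distinct_map)
  moreover have "distinct (butlast (map v [0..<Suc n]))"
    using inj_v by (simp add: vs distinct_map atLeast0LessThan)
  moreover have "set (map v [0..<Suc n]) \<subseteq> V"
    using walk EV n unfolding vs hwalk_def by auto blast+
  moreover have "\<forall>i<n. map v [0..<Suc n] ! i \<in> map f [0..<n] ! i \<and>
      map v [0..<Suc n] ! (i + 1) \<in> map f [0..<n] ! i"
    using walk unfolding hwalk_def by (simp del: upt_Suc)
  moreover have "hd (map v [0..<Suc n]) = last (map v [0..<Suc n])"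
    using closed by (simp del: upt_Suc add: hd_map last_map)
  ultimately show ?thesis
    using walk n inj_f unfolding hcycle_def hpath_def hwalk_def
    by (auto simp: distinct_map atLeast0LessThan simp del: upt_Suc)
qed

lemma closest_repeated_edge_hcycle:
  assumes EV: "\<forall>e\<in>E. e \<subseteq> V" and walk: "hwalk E v f n" and inj_v: "inj_on v {..<n}"
    and a: "a + d < n" "d \<ge> 2" "f a = f (a + d)"
    and closest: "\<And>b e. 0 < e \<Longrightarrow> e < d \<Longrightarrow> b + e < n \<Longrightarrow> f b \<noteq> f (b + e)"
  shows "\<exists>vs es. hcycle V E vs es"
proof -
  \<comment> \<open>the segment v_{a+1} .. v_{a+d}, closed up through the edge f_a = f_{a+d}\<close>
  define w where "w k = (if k < d then v (Suc a + k) else v (Suc a))" for k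
  define g where "g k = (if k < d - 1 then f (Suc a + k) else f a)" for k
  have "hwalk E w g d"
    unfolding hwalk_def
  proof (intro allI impI)
    fix k assume k: "k < d"
    show "g k \<in> E \<and> w k \<in> g k \<and> w (Suc k) \<in> g k"
    proof (cases "k < d - 1")
      case True
      then show ?thesis
        using walk a k unfolding hwalk_def g_def w_def by auto
    next
      case False
      then have "Suc a + k = a + d"
        using k by simp
      with False have "g k = f a" "w k = v (a + d)" "w (Suc k) = v (Suc a)"
        using k by (auto simp: g_def w_def)
      then show ?thesis
        using walk a unfolding hwalk_def by (metis add_lessD1)
    qed
  qed
  moreover have "inj_on w {..<d}"
  proof (rule inj_onI)
    fix x y assume "x \<in> {..<d}" "y \<in> {..<d}" "w x = w y"
    then have "v (Suc a + x) = v (Suc a + y)" "Suc a + x < n" "Suc a + y < n"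
      using a by (auto simp: w_def)
    then show "x = y"
      using inj_v by (auto dest: inj_onD)
  qed
  moreover have "inj_on g {..<d}"
  proof (rule ccontr)
    assume "\<not> inj_on g {..<d}"
    then obtain x y where xy: "x < y" "y < d" "g x = g y"
      unfolding inj_on_def by (metis lessThan_iff linorder_neqE_nat)
    show False
    proof (cases "y < d - 1")
      case True
      then show False
        using closest[of "y - x" "Suc a + x"] xy a by (auto simp: g_def)
    next
      case False
      then have "f (Suc a + x) = f a"
        using xy by (auto simp: g_def split: if_splits)
      then show False
        using closest[of "Suc x" a] xy a False by simp
    qed
  qed
  moreover have "w d = w 0"
    using a by (simp add: w_def)
  ultimately show ?thesis
    using closed_hwalk_hcycle[OF EV \<open>d \<ge> 2\<close>] by blast
qed

lemma closed_hwalk_obtains_hcycle: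
  assumes EV: "\<forall>e\<in>E. e \<subseteq> V" and n: "n \<ge> 2" and walk: "hwalk E v f n"
    and inj_v: "inj_on v {..<n}" and closed: "v n = v 0"
    and consecutive: "\<And>i. Suc i < n \<Longrightarrow> f i \<noteq> f (Suc i)"
  shows "\<exists>vs es. hcycle V E vs es"
proof (cases "inj_on f {..<n}")
  case True
  then show ?thesis
    using closed_hwalk_hcycle[OF EV n walk True inj_v closed] by blast
next
  case False
  define repeats where "repeats d \<longleftrightarrow> (\<exists>a. a + d < n \<and> 0 < d \<and> f a = f (a + d))" for d
  from False obtain i j where "i < j" "j < n" "f i = f j"
    unfolding inj_on_def by (metis lessThan_iff linorder_neqE_nat)
  then have "repeats (j - i)"
    unfolding repeats_def by (intro exI[of _ i]) auto
  then obtain d where "repeats d" and closest: "\<And>d'. d' < d \<Longrightarrow> \<not> repeats d'"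
    using exists_least_iff[of repeats] by blast
  then obtain a where a: "a + d < n" "0 < d" "f a = f (a + d)"
    unfolding repeats_def by blast
  have "d \<ge> 2"
    using consecutive[of a] a by (cases "d = 1") auto
  with a show ?thesis
    using closest_repeated_edge_hcycle[OF EV walk inj_v] closest unfolding repeats_def
    by blast
qed

lemma trancl_UN_imp_ord_chain:
  assumes "(x, y) \<in> (\<Union>e\<in>E. ord e)\<^sup>+"
  obtains v f n where "0 < n" "v 0 = x" "v n = y" "ord_chain E ord v f n"
proof -
  obtain n v where n: "0 < n" "v 0 = x" "v n = y"
    and "\<forall>i<n. (v i, v (Suc i)) \<in> (\<Union>e\<in>E. ord e)"
    using assms by (auto simp: trancl_power relpow_fun_conv)
  then have "\<forall>i. \<exists>e. i < n \<longrightarrow> e \<in> E \<and> (v i, v (Suc i)) \<in> ord e"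
    by blast
  then obtain f where "ord_chain E ord v f n"
    unfolding ord_chain_def by (metis)
  with n that show ?thesis by blast
qed

lemma ord_chain_segment:
  assumes "ord_chain E ord v f n" "i \<le> j" "j \<le> n"
  shows "ord_chain E ord (\<lambda>k. v (k + i)) (\<lambda>k. f (k + i)) (j - i)"
  using assms unfolding ord_chain_def by (auto simp: add.commute)

lemma ord_chain_merge_steps:
  assumes chain: "ord_chain E ord v f n" and i: "Suc i < n" and same: "f i = f (Suc i)"
    and trans: "\<And>e. e \<in> E \<Longrightarrow> trans (ord e)"
  shows "ord_chain E ord (\<lambda>k. if k \<le> i then v k else v (Suc k))
           (\<lambda>k. if k \<le> i then f k else f (Suc k)) (n - 1)"
  unfolding ord_chain_def
proof (intro allI impI)
  fix k assume "k < n - 1"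
  have step: "f j \<in> E \<and> (v j, v (Suc j)) \<in> ord (f j)" if "j < n" for j
    using chain that unfolding ord_chain_def by blast
  have shortcut: "(v i, v (Suc (Suc i))) \<in> ord (f i)"
    using step[of i] step[of "Suc i"] i same trans[of "f i"] by (auto dest: transD)
  show "(if k \<le> i then f k else f (Suc k)) \<in> E \<and>
      (if k \<le> i then v k else v (Suc k), if Suc k \<le> i then v (Suc k) else v (Suc (Suc k)))
        \<in> ord (if k \<le> i then f k else f (Suc k))"
    using \<open>k < n - 1\<close> step[of k] step[of "Suc k"] i shortcut
    by (cases k i rule: linorder_cases) auto
qed

lemma hypertree_closed_ord_chain_trivial:
  assumes tree: "hypertree V E"
    and spo: "\<And>e. e \<in> E \<Longrightarrow> strict_partial_order_on e (ord e)"
    and "ord_chain E ord v f n" "v n = v 0"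
  shows "n = 0"
  using assms(3,4)
proof (induction n arbitrary: v f rule: less_induct)
  case (less n)
  then have chain: "ord_chain E ord v f n" and closed: "v n = v 0"
    by auto
  have EV: "\<forall>e\<in>E. e \<subseteq> V"
    using tree unfolding hypertree_def hypergraph_def by blast
  have ord_sub: "ord e \<subseteq> e \<times> e" and irrefl: "irrefl (ord e)" and trans: "trans (ord e)"
    if "e \<in> E" for e
    using spo[OF that] unfolding strict_partial_order_on_def by auto
  have walk: "hwalk E v f n"
    using chain ord_sub unfolding ord_chain_def hwalk_def by blast
  have "n \<noteq> 1"
    using chain closed irrefl unfolding ord_chain_def irrefl_def by fastforce
  have "v i \<noteq> v j" if "i < j" "j < n" for i j
  proof
    assume "v i = v j"
    moreover have "j - i < n"
      using that by linarith
    ultimately show False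
      using less.IH[OF _ ord_chain_segment[OF chain, of i j]] that by simp
  qed
  then have inj_v: "inj_on v {..<n}"
    by (metis inj_onI lessThan_iff linorder_neqE_nat)
  have "f i \<noteq> f (Suc i)" if "Suc i < n" for i
  proof
    assume "f i = f (Suc i)"
    moreover have "n - 1 < n" "\<not> n - 1 \<le> i" "Suc (n - 1) = n"
      using that by auto
    ultimately show False
      using less.IH[OF _ ord_chain_merge_steps[OF chain that _ trans]] closed by simp
  qed
  then show "n = 0"
    using closed_hwalk_obtains_hcycle[OF EV _ walk inj_v closed] \<open>n \<noteq> 1\<close> tree
    unfolding hypertree_def by fastforce
qed

theorem lemma3p2:
  fixes V :: "'a set" and E :: "'a set set" and ord :: "'a set \<Rightarrow> 'a rel"
  assumes "hypertree V E"
    and "\<And>e. e \<in> E \<Longrightarrow> strict_partial_order_on e (ord e)"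
  shows "strict_partial_order_on V ((\<Union>e\<in>E. ord e)\<^sup>+)"
proof -
  have "(\<Union>e\<in>E. ord e) \<subseteq> V \<times> V"
    using assms unfolding hypertree_def hypergraph_def strict_partial_order_on_def by blast
  moreover have "irrefl ((\<Union>e\<in>E. ord e)\<^sup>+)"
    unfolding irrefl_def
    by (metis trancl_UN_imp_ord_chain hypertree_closed_ord_chain_trivial[OF assms] less_irrefl)
  ultimately show ?thesis
    unfolding strict_partial_order_on_def
    using trancl_subset_Sigma trans_trancl by blast
qed

end
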